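(* Define $\zeta:(1,\infty)\to\mathbb{R}$ by $$\zeta(d):=\int_0^1\ln(1/z^d-1)\,dz+\int_1^\infty\ln(1-1/z^d)\,dz.$$ Then $\zeta$ is strictly monotonically increasing and $$\lim_{d\to1^+}\zeta(d)=-\infty,\qquad\zeta(2)=0,\qquad\lim_{d\to\infty}\zeta(d)/d=1.$$ *)

theory Defs
  imports "HOL-Analysis.Analysis"
begin

text \<open>zeta(d) = int_0^1 ln(1/z^d - 1) dz + int_1^oo ln(1 - 1/z^d) dz, for d > 1.
  Integrals are Henstock-Kurzweil integrals over [0,1] and [1,oo); the integrands are
  absolutely integrable for d > 1, so this agrees with the Lebesgue integral.\<close>
definition zeta :: "real \<Rightarrow> real" where
  "zeta d = integral {0..1} (\<lambda>z. ln (1 / z powr d - 1))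
          + integral {1..} (\<lambda>z. ln (1 - 1 / z powr d))"

end

theory Submission
  imports Defs "HOL-Real_Asymp.Real_Asymp"
begin

text \<open>Expanding \<open>-ln (1 - w) = \<Sum>k. w^(k+1)/(k+1)\<close> and integrating termwise (monotone
  convergence) against \<open>w = z^d\<close> on \<open>(0,1)\<close> and \<open>w = z^-d\<close> on \<open>(1,\<infinity>)\<close> turns both integrals
  into the series of the digamma function \<open>\<psi>\<close>; this gives \<open>\<zeta>(d) = \<psi>(1 - 1/d) - \<psi>(1/d)\<close>, which
  by the reflection formula equals \<open>\<pi> cot (\<pi>/d)\<close>. Monotonicity comes from \<open>\<psi>\<close> being
  increasing, the limits from the closed form.\<close>

lemma Gamma_reflection_real: "Gamma (x::real) * Gamma (1 - x) = pi / sin (pi * x)"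
proof -
  have "complex_of_real (Gamma x * Gamma (1 - x)) =
        Gamma (complex_of_real x) * Gamma (1 - complex_of_real x)"
    by (simp flip: Gamma_complex_of_real)
  also have "\<dots> = of_real pi / sin (of_real pi * of_real x)"
    by (rule Gamma_reflection_complex)
  also have "\<dots> = complex_of_real (pi / sin (pi * x))"
    by (simp flip: sin_of_real)
  finally show ?thesis
    by (simp only: of_real_eq_iff)
qed

text \<open>Obtained by differentiating the reflection formula for \<open>\<Gamma>\<close>.\<close>
lemma Digamma_reflection_real:
  assumes "(x::real) \<notin> \<int>"
  shows "Digamma (1 - x) - Digamma x = pi * cot (pi * x)"
proof -
  have x: "x \<notin> \<int>\<^sub>\<le>\<^sub>0" "1 - x \<notin> \<int>\<^sub>\<le>\<^sub>0"
    using assms Ints_diff[OF Ints_1, of "1 - x"] by (auto intro: not_in_Ints_imp_not_in_nonpos_Ints)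
  have s: "sin (pi * x) \<noteq> 0"
    using assms by (auto simp: sin_zero_iff_int2)
  have "((\<lambda>x. Gamma x * Gamma (1 - x)) has_field_derivative
        Gamma x * Digamma x * Gamma (1 - x) - Gamma x * (Gamma (1 - x) * Digamma (1 - x))) (at x)"
    using x by (auto intro!: derivative_eq_intros)
  moreover have "((\<lambda>x. Gamma x * Gamma (1 - x)) has_field_derivative
        - (pi * (cos (pi * x) * pi)) / (sin (pi * x))\<^sup>2) (at x)"
    unfolding Gamma_reflection_real
    using s by (auto intro!: derivative_eq_intros simp: power2_eq_square)
  ultimately have "pi / sin (pi * x) * (Digamma x - Digamma (1 - x)) =
                   - (pi * (cos (pi * x) * pi)) / (sin (pi * x))\<^sup>2"
    by (auto dest: DERIV_unique simp: Gamma_reflection_real[of x, symmetric] algebra_simps)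
  then have "pi * sin (pi * x) *
      (sin (pi * x) * Digamma (1 - x) - pi * cos (pi * x) - Digamma x * sin (pi * x)) = 0"
    using s by (simp add: field_simps power2_eq_square)
  then have "sin (pi * x) * Digamma (1 - x) - pi * cos (pi * x) - Digamma x * sin (pi * x) = 0"
    using s pi_neq_zero mult_eq_0_iff by metis
  then show ?thesis
    using s by (simp add: cot_def field_simps)
qed

lemma Digamma_sums:
  fixes z :: "'a::{real_normed_field,banach}"
  assumes "z \<noteq> 0"
  shows "(\<lambda>k. inverse (of_nat (Suc k)) - inverse (z + of_nat k)) sums (Digamma z + euler_mascheroni)"
  using summable_sums[OF summable_Digamma[OF assms]] by (simp add: Digamma_def)

lemma minus_ln_one_minus_sums:
  fixes x :: real
  assumes "\<bar>x\<bar> < 1"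
  shows "(\<lambda>k. x ^ Suc k / real (Suc k)) sums (- ln (1 - x))"
proof -
  have "(\<lambda>k. x ^ k / real k) sums (- ln (1 - x))"
    using sums_minus[OF ln_series'[of "-x"]] assms by simp
  then show ?thesis
    using sums_Suc_iff[of "\<lambda>k. x ^ k / real k"] by simp
qed

lemma has_integral_Ici_iff_Ioi:
  fixes f :: "real \<Rightarrow> 'a::banach"
  shows "(f has_integral I) {a..} \<longleftrightarrow> (f has_integral I) {a<..}"
  by (intro has_integral_spike_set_eq negligible_subset[OF negligible_sing[of a]]) auto

lemma has_integral_minus_ln_one_minus:
  fixes w :: "'a::euclidean_space \<Rightarrow> real"
  assumes w: "\<And>z. z \<in> S \<Longrightarrow> 0 \<le> w z \<and> w z < 1"
    and I: "\<And>k. ((\<lambda>z. w z ^ Suc k / real (Suc k)) has_integral I k) S"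
    and L: "I sums L"
  shows "((\<lambda>z. - ln (1 - w z)) has_integral L) S"
proof (rule has_integral_monotone_convergence_increasing)
  show "((\<lambda>z. \<Sum>k<N. w z ^ Suc k / real (Suc k)) has_integral (\<Sum>k<N. I k)) S" for N
    by (intro has_integral_sum I) auto
  show "(\<Sum>k<N. w z ^ Suc k / real (Suc k)) \<le> (\<Sum>k<Suc N. w z ^ Suc k / real (Suc k))"
    if "z \<in> S" for N z
    using w[OF that] by simp
  show "(\<lambda>N. \<Sum>k<N. w z ^ Suc k / real (Suc k)) \<longlonglongrightarrow> - ln (1 - w z)" if "z \<in> S" for z
    using minus_ln_one_minus_sums[of "w z"] w[OF that] by (simp add: sums_def)
  show "(\<lambda>N. \<Sum>k<N. I k) \<longlonglongrightarrow> L"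
    using L by (simp add: sums_def)
qed

lemma has_integral_minus_ln_one_minus_powr:
  fixes d :: real
  assumes d: "d > 0"
  shows "((\<lambda>z. - ln (1 - z powr d)) has_integral (Digamma (1 + 1/d) + euler_mascheroni)) {0<..<1}"
proof (rule has_integral_minus_ln_one_minus
    [where I = "\<lambda>k. inverse (real (Suc k)) - inverse (1 + 1/d + real k)"])
  show "0 \<le> z powr d \<and> z powr d < 1" if "z \<in> {0<..<1}" for z
    using that d powr_less_mono2[of d z 1] by auto
  show "((\<lambda>z. (z powr d) ^ Suc k / real (Suc k)) has_integral
          (inverse (real (Suc k)) - inverse (1 + 1/d + real k))) {0<..<1}" for k
  proof -
    have "0 < d * Suc k"
      using d by simp
    then have "((\<lambda>z. z powr (d * Suc k)) has_integral 1 / (d * Suc k + 1)) {0..1}"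
      using has_integral_powr_from_0[of "d * Suc k" 1] by simp
    then have "((\<lambda>z. z powr (d * Suc k) / Suc k) has_integral 1 / (d * Suc k + 1) / Suc k) {0<..<1}"
      by (subst (asm) has_integral_Icc_iff_Ioo) (rule has_integral_divide)
    moreover have "(z powr d) ^ Suc k / Suc k = z powr (d * Suc k) / Suc k" if "z \<in> {0<..<1}" for z
      using that by (subst powr_realpow[symmetric]) (auto simp: powr_powr)
    moreover have "1 / (d * Suc k + 1) / Suc k = inverse (real (Suc k)) - inverse (1 + 1/d + real k)"
    proof -
      have "1 + 1/d + real k = (d * Suc k + 1) / d"
        using d by (simp add: field_simps)
      moreover have "d * Suc k + 1 > 0"
        using d by (simp add: add_pos_nonneg)
      ultimately show ?thesis
        using d by (simp add: field_simps)
    qed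
    ultimately show ?thesis
      by (metis (no_types, lifting) has_integral_cong)
  qed
  show "(\<lambda>k. inverse (real (Suc k)) - inverse (1 + 1/d + real k)) sums
          (Digamma (1 + 1/d) + euler_mascheroni)"
    using d by (intro Digamma_sums) (smt (verit) zero_less_divide_1_iff)
qed

lemma has_integral_minus_ln_one_minus_powr_minus:
  fixes d :: real
  assumes d: "d > 1"
  shows "((\<lambda>z. - ln (1 - z powr (- d))) has_integral - (Digamma (1 - 1/d) + euler_mascheroni)) {1<..}"
proof (rule has_integral_minus_ln_one_minus
    [where I = "\<lambda>k. - (inverse (real (Suc k)) - inverse (1 - 1/d + real k))"])
  show "0 \<le> z powr (- d) \<and> z powr (- d) < 1" if "z \<in> {1<..}" for z
    using that d by (auto simp: powr_minus_divide)
  show "((\<lambda>z. (z powr (- d)) ^ Suc k / real (Suc k)) has_integral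
          - (inverse (real (Suc k)) - inverse (1 - 1/d + real k))) {1<..}" for k
  proof -
    have "d * 1 \<le> d * Suc k"
      using d by (intro mult_left_mono) auto
    then have gt1: "d * Suc k > 1"
      using d by linarith
    then have "((\<lambda>z. z powr (- d * Suc k)) has_integral 1 / (d * Suc k - 1)) {1..}"
      using has_integral_powr_to_inf[of "- d * Suc k" 1] by (simp add: minus_divide_right)
    then have "((\<lambda>z. z powr (- d * Suc k) / Suc k) has_integral 1 / (d * Suc k - 1) / Suc k) {1<..}"
      by (subst (asm) has_integral_Ici_iff_Ioi) (rule has_integral_divide)
    moreover have "(z powr (- d)) ^ Suc k / Suc k = z powr (- d * Suc k) / Suc k"
      if "z \<in> {1<..}" for z
      using that by (subst powr_realpow[symmetric]) (auto simp: powr_powr)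
    moreover have "1 / (d * Suc k - 1) / Suc k = - (inverse (real (Suc k)) - inverse (1 - 1/d + real k))"
    proof -
      have "1 - 1/d + real k = (d * Suc k - 1) / d"
        using d by (simp add: field_simps)
      then show ?thesis
        using d gt1 by (simp add: field_simps)
    qed
    ultimately show ?thesis
      by (metis (no_types, lifting) has_integral_cong)
  qed
  have "1 - 1/d \<noteq> 0"
    using d by simp
  then show "(\<lambda>k. - (inverse (real (Suc k)) - inverse (1 - 1/d + real k))) sums
               - (Digamma (1 - 1/d) + euler_mascheroni)"
    by (intro sums_minus Digamma_sums)
qed

lemma has_integral_minus_ln: "((\<lambda>z. - ln z) has_integral 1) {0..1::real}"
proof -
  have "((\<lambda>z. - ln (1 - z powr 1)) has_integral (Digamma (1 + 1/1) + euler_mascheroni)) {0<..<1::real}"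
    by (rule has_integral_minus_ln_one_minus_powr) simp
  moreover have "Digamma (1 + 1/1 :: real) + euler_mascheroni = 1"
    using Digamma_plus1[of "1::real"] by simp
  ultimately have "((\<lambda>z. - ln (1 - z)) has_integral 1) {0<..<1::real}"
    by (auto elim: has_integral_cong[THEN iffD1, rotated])
  then have "((\<lambda>z. - ln (1 - z)) has_integral 1) {0..1::real}"
    by (simp only: has_integral_Icc_iff_Ioo)
  then have "((\<lambda>z. - ln (1 - - z)) has_integral 1) {-1..-0::real}"
    by (rule has_integral_reflect_lemma_real)
  from has_integral_shift_real_ivl[OF this, of "-1"] show ?thesis
    by simp
qed

lemma has_integral_ln_inv_powr_minus_one:
  fixes d :: real
  assumes d: "d > 0"
  shows "((\<lambda>z. ln (1 / z powr d - 1)) has_integral - (Digamma (1/d) + euler_mascheroni)) {0..1}"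
proof -
  have "((\<lambda>z. - (- ln (1 - z powr d)) + d * (- ln z)) has_integral
          - (Digamma (1 + 1/d) + euler_mascheroni) + d * 1) {0<..<1}"
    using has_integral_minus_ln unfolding has_integral_Icc_iff_Ioo
    by (intro has_integral_add has_integral_neg has_integral_mult_right
        has_integral_minus_ln_one_minus_powr d)
  moreover have "ln (1 / z powr d - 1) = - (- ln (1 - z powr d)) + d * (- ln z)"
    if "z \<in> {0<..<1}" for z
  proof -
    have "0 < z powr d" "z powr d < 1"
      using that d powr_less_mono2[of d z 1] by auto
    moreover have "1 / z powr d - 1 = (1 - z powr d) / z powr d"
      using calculation by (simp add: field_simps)
    ultimately have "ln (1 / z powr d - 1) = ln (1 - z powr d) - ln (z powr d)"
      by (simp add: ln_div)
    then show ?thesis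
      using that by (simp add: ln_powr)
  qed
  moreover have "- (Digamma (1 + 1/d) + euler_mascheroni) + d * 1 = - (Digamma (1/d) + euler_mascheroni)"
    using Digamma_plus1[of "1/d"] d by (simp add: add.commute)
  ultimately show ?thesis
    unfolding has_integral_Icc_iff_Ioo by (metis (no_types, lifting) has_integral_cong)
qed

lemma has_integral_ln_one_minus_inv_powr:
  fixes d :: real
  assumes d: "d > 1"
  shows "((\<lambda>z. ln (1 - 1 / z powr d)) has_integral (Digamma (1 - 1/d) + euler_mascheroni)) {1..}"
  using has_integral_neg[OF has_integral_minus_ln_one_minus_powr_minus[OF d]]
  by (simp add: has_integral_Ici_iff_Ioi powr_minus_divide add.commute)

lemma zeta_eq_Digamma:
  assumes "d > 1"
  shows "zeta d = Digamma (1 - 1/d) - Digamma (1/d)"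
  using has_integral_ln_inv_powr_minus_one[of d] has_integral_ln_one_minus_inv_powr[OF assms] assms
  by (simp add: zeta_def integral_unique)

lemma zeta_eq_cot:
  assumes "d > 1"
  shows "zeta d = pi * cot (pi / d)"
proof -
  have "frac (1/d) = 1/d"
    using assms by (simp add: frac_eq)
  then have "1/d \<notin> \<int>"
    using assms by (simp flip: frac_gt_0_iff)
  then show ?thesis
    using zeta_eq_Digamma[OF assms] Digamma_reflection_real[of "1/d"] by simp
qed

theorem lemma3:
  shows "strict_mono_on {1<..} zeta
         \<and> filterlim zeta at_bot (at_right 1)
         \<and> zeta 2 = 0
         \<and> ((\<lambda>d. zeta d / d) \<longlongrightarrow> 1) at_top"
proof (intro conjI)
  show "strict_mono_on {1<..} zeta"
  proof (rule strict_mono_onI)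
    fix a b :: real
    assume "a \<in> {1<..}" "b \<in> {1<..}" "a < b"
    then have "Digamma (1/b) < Digamma (1/a)" "Digamma (1 - 1/a) < Digamma (1 - 1/b)"
      by (auto intro!: Digamma_real_strict_mono simp: field_simps)
    with \<open>a \<in> {1<..}\<close> \<open>b \<in> {1<..}\<close> show "zeta a < zeta b"
      by (simp add: zeta_eq_Digamma)
  qed
  have "\<forall>\<^sub>F d in at_right 1. pi * cot (pi / d) = zeta d"
    using eventually_at_right_less by (rule eventually_mono) (simp add: zeta_eq_cot)
  moreover have "filterlim (\<lambda>d. pi * cot (pi / d)) at_bot (at_right (1::real))"
    unfolding cot_def by real_asymp
  ultimately show "filterlim zeta at_bot (at_right 1)"
    by (simp add: filterlim_cong)
  show "zeta 2 = 0"
    by (simp add: zeta_eq_cot cot_def)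
  have "\<forall>\<^sub>F d in at_top. pi * cot (pi / d) / d = zeta d / d"
    using eventually_gt_at_top[of 1] by (rule eventually_mono) (simp add: zeta_eq_cot)
  moreover have "((\<lambda>d::real. pi * cot (pi / d) / d) \<longlongrightarrow> 1) at_top"
    unfolding cot_def by real_asymp
  ultimately show "((\<lambda>d. zeta d / d) \<longlongrightarrow> 1) at_top"
    by (rule Lim_transform_eventually[rotated])
qed

end
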